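(* Let $f\colon S^2\to S^2$ be a Thurston map and $\mathcal{C}\subset S^2$ a Jordan curve with $\operatorname{post}(f)\subset\mathcal{C}$. For every $n\ge0$, the union of all white $n$-tiles and the union of all black $n$-tiles are both connected subsets of $S^2$.
   Context: A Thurston map is an orientation-preserving, postcritically finite branched covering $f\colon S^2\to S^2$ (i.e. $\operatorname{post}(f)=\bigcup_{n\ge1}\{f^n(c): c\text{ critical}\}$ is finite), with $\#\operatorname{post}(f)\ge3$. Orient $\mathcal{C}$ and let $U_w,U_b$ be the two components of $S^2\setminus\mathcal{C}$, where $\mathcal{C}$ is positively oriented as boundary of $U_w$. A white (black) $n$-tile is the closure of a component of $f^{-n}(U_w)$ (respectively $f^{-n}(U_b)$). *)

theory Defs
  imports "HOL-Complex_Analysis.Complex_Analysis"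
begin

definition S2 :: "(real^3) set" where
  "S2 = sphere 0 1"

definition north :: "real^3" where
  "north = vector [0, 0, 1]"

text \<open>Stereographic projection from the north pole and its inverse; they fix
  the (reference) orientation of the sphere.\<close>
definition stereo :: "real^3 \<Rightarrow> complex" where
  "stereo x = Complex (x$1) (x$2) / complex_of_real (1 - x$3)"

definition inv_stereo :: "complex \<Rightarrow> real^3" where
  "inv_stereo w = (1 / ((cmod w)\<^sup>2 + 1)) *\<^sub>R
      vector [2 * Re w, 2 * Im w, (cmod w)\<^sup>2 - 1]"

definition plane_orient_pres :: "(complex \<Rightarrow> complex) \<Rightarrow> complex set \<Rightarrow> bool" where
  "plane_orient_pres h W \<longleftrightarrow>
     (\<forall>z r. 0 < r \<and> cball z r \<subseteq> W \<longrightarrow> winding_number (h \<circ> circlepath z r) (h z) = 1)"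

definition chart_orient_pres :: "(real^3 \<Rightarrow> complex) \<Rightarrow> (real^3) set \<Rightarrow> bool" where
  "chart_orient_pres \<phi> U \<longleftrightarrow> plane_orient_pres (\<phi> \<circ> inv_stereo) (stereo ` (U - {north}))"

definition local_form :: "(real^3 \<Rightarrow> real^3) \<Rightarrow> real^3 \<Rightarrow> nat \<Rightarrow> bool" where
  "local_form f p d \<longleftrightarrow> 1 \<le> d \<and>
     (\<exists>U V \<phi> \<phi>' \<psi> \<psi>'.
        openin (top_of_set S2) U \<and> openin (top_of_set S2) V \<and>
        p \<in> U \<and> f p \<in> V \<and> f ` U \<subseteq> V \<and>
        homeomorphism U (ball 0 1) \<phi> \<phi>' \<and> homeomorphism V (ball 0 1) \<psi> \<psi>' \<and>
        chart_orient_pres \<phi> U \<and> chart_orient_pres \<psi> V \<and>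
        \<phi> p = 0 \<and> \<psi> (f p) = 0 \<and>
        (\<forall>z\<in>ball 0 1. \<psi> (f (\<phi>' z)) = z ^ d))"

definition branched_cover :: "(real^3 \<Rightarrow> real^3) \<Rightarrow> bool" where
  "branched_cover f \<longleftrightarrow> continuous_on S2 f \<and> f ` S2 \<subseteq> S2 \<and>
     (\<forall>p\<in>S2. \<exists>d. local_form f p d)"

definition critical :: "(real^3 \<Rightarrow> real^3) \<Rightarrow> real^3 \<Rightarrow> bool" where
  "critical f p \<longleftrightarrow> p \<in> S2 \<and> (\<exists>d\<ge>2. local_form f p d)"

definition post :: "(real^3 \<Rightarrow> real^3) \<Rightarrow> (real^3) set" where
  "post f = {(f ^^ n) c | c n. 1 \<le> n \<and> critical f c}"

definition thurston_map :: "(real^3 \<Rightarrow> real^3) \<Rightarrow> bool" where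
  "thurston_map f \<longleftrightarrow> branched_cover f \<and> finite (post f) \<and> 3 \<le> card (post f)"

definition jordan_curve :: "(real^3) set \<Rightarrow> bool" where
  "jordan_curve C \<longleftrightarrow> (\<exists>\<gamma>. simple_path \<gamma> \<and> pathfinish \<gamma> = pathstart \<gamma> \<and>
      path_image \<gamma> \<subseteq> S2 \<and> C = path_image \<gamma>)"

text \<open>n-tiles of colour U (U a component of S2 - C): closures of components of f^{-n}(U).\<close>
definition tiles :: "(real^3 \<Rightarrow> real^3) \<Rightarrow> nat \<Rightarrow> (real^3) set \<Rightarrow> (real^3) set set" where
  "tiles f n U = closure ` components (S2 \<inter> (f ^^ n) -` U)"

end

theory Submission
  imports Defs
begin

text \<open>
  Write g for the iterate f^n and W for the complementary Jordan domain S2 - C - U. The map g is open,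
  and off g^{-1}(C), which contains all critical points of g, it is a local homeomorphism. Hence every
  component V of g^{-1}(W) is a covering space of the simply connected domain W, so g maps V
  homeomorphically onto W; thus V is a simply connected open subset of the sphere missing a point,
  and its frontier is connected. The union Y of the tiles is closed and, because g is open and C lies
  in the closure of U, the sphere is the disjoint union of Y and the finitely many components V.
  A separation of Y would extend over every V, whose connected frontier lies in one of its two
  pieces, to a separation of the sphere.
\<close>

section \<open>Topology of the sphere\<close>

lemma compact_S2: "compact S2"
  by (simp add: S2_def)

lemma closed_S2: "closed S2"
  by (simp add: S2_def)

lemma connected_S2: "connected S2"
  unfolding S2_def by (rule connected_sphere) simp

lemma locally_path_connected_S2: "locally path_connected S2"
  unfolding S2_def by (rule locally_path_connected_sphere)

lemma locally_connected_S2: "locally connected S2"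
  unfolding S2_def by (rule locally_connected_sphere)

lemma closure_subset_S2: "A \<subseteq> S2 \<Longrightarrow> closure A \<subseteq> S2"
  by (rule closure_minimal[OF _ closed_S2])

lemma compact_closure_subset_S2: "A \<subseteq> S2 \<Longrightarrow> compact (closure A)"
  by (meson bounded_subset compact_S2 compact_closure compact_imp_bounded)

lemma homeomorphism_S2_minus_point:
  assumes "p \<in> S2"
  obtains h :: "real^3 \<Rightarrow> complex" and k where "homeomorphism (S2 - {p}) UNIV h k"
proof -
  have "(sphere (0::real^3) 1 - {p}) homeomorphic {x::real^3. axis 3 1 \<bullet> x = 0}"
    by (rule homeomorphic_punctured_sphere_hyperplane) (use assms in \<open>auto simp: S2_def axis_eq_0_iff\<close>)
  also have "\<dots> homeomorphic (UNIV::complex set)"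
    by (subst homeomorphic_affine_sets_eq) (auto simp: affine_hyperplane aff_dim_hyperplane axis_eq_0_iff)
  finally show ?thesis
    using that unfolding S2_def homeomorphic_def by blast
qed

lemma openin_Int_closure_eq_empty:
  assumes "openin (top_of_set S) X" "A \<subseteq> S"
  shows "X \<inter> closure A = {} \<longleftrightarrow> X \<inter> A = {}"
proof -
  obtain G where "open G" "X = S \<inter> G"
    using assms(1) by (auto simp: openin_open)
  then show ?thesis
    using open_Int_closure_eq_empty[of G A] assms(2) closure_subset by blast
qed

lemma openin_components_openin:
  assumes "locally connected X" "openin (top_of_set X) Y" "V \<in> components Y"
  shows "openin (top_of_set X) V"
proof -
  have "locally connected Y"
    by (rule locally_open_subset[OF assms(1,2)])
  then show ?thesis
    using assms(2,3) openin_components_locally_connected openin_trans by blast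
qed

lemma closure_Int_component_eq:
  assumes X: "locally connected X" and Y: "openin (top_of_set X) Y" and V: "V \<in> components Y"
  shows "closure V \<inter> Y = V"
proof
  show "V \<subseteq> closure V \<inter> Y"
    using in_components_subset[OF V] closure_subset by blast
  show "closure V \<inter> Y \<subseteq> V"
  proof
    fix z assume z: "z \<in> closure V \<inter> Y"
    define V' where "V' = connected_component_set Y z"
    have V': "V' \<in> components Y"
      using z unfolding V'_def components_iff by blast
    have "z \<in> V'"
      using z by (simp add: V'_def)
    then have "V' \<inter> closure V \<noteq> {}"
      using z by blast
    then have "V' \<inter> V \<noteq> {}"
      using openin_Int_closure_eq_empty[OF openin_components_openin[OF X Y V']]
        in_components_subset[OF V] openin_imp_subset[OF Y] by blast
    then have "V' = V"
      using components_nonoverlap[OF V' V] by blast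
    then show "z \<in> V"
      using \<open>z \<in> V'\<close> by simp
  qed
qed

lemma finite_separated_by_balls:
  fixes F :: "'a::metric_space set"
  assumes "finite F"
  obtains r where "r > 0" "\<And>a b. a \<in> F \<Longrightarrow> b \<in> F \<Longrightarrow> a \<noteq> b \<Longrightarrow> ball a r \<inter> ball b r = {}"
proof -
  have "\<forall>a\<in>F. \<exists>d>0. \<forall>b\<in>F. b \<noteq> a \<longrightarrow> d \<le> dist a b"
    using finite_set_avoid[OF assms] by blast
  then obtain d where d: "\<And>a. a \<in> F \<Longrightarrow> d a > 0" "\<And>a b. a \<in> F \<Longrightarrow> b \<in> F \<Longrightarrow> b \<noteq> a \<Longrightarrow> d a \<le> dist a b"
    by metis
  define r where "r = Min (insert 1 (d ` F)) / 2"
  have "r > 0"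
    using assms d(1) by (auto simp: r_def)
  moreover have "ball a r \<inter> ball b r = {}" if "a \<in> F" "b \<in> F" "a \<noteq> b" for a b
  proof -
    have "2 * r \<le> d a"
      using assms that by (auto simp: r_def)
    also have "\<dots> \<le> dist a b"
      using d(2) that by blast
    finally have "2 * r \<le> dist a b" .
    show ?thesis
    proof (rule ccontr)
      assume "ball a r \<inter> ball b r \<noteq> {}"
      then obtain x where "dist a x < r" "dist b x < r"
        by auto
      then show False
        using \<open>2 * r \<le> dist a b\<close> dist_triangle[of a b x] by (simp add: dist_commute)
    qed
  qed
  ultimately show ?thesis
    using that by blast
qed

lemma covering_space_simply_connected_homeomorphism:
  fixes p :: "'a::real_normed_vector \<Rightarrow> 'b::real_normed_vector"
  assumes cov: "covering_space V p W" and "connected V"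
    and "simply_connected W" and "locally path_connected W"
  obtains s where "homeomorphism V W p s"
proof (cases "V = {}")
  case True
  then show ?thesis
    using covering_space_imp_surjective[OF cov] that by (auto simp: homeomorphism_def)
next
  case False
  then obtain a where a: "a \<in> V" by blast
  have pV: "p ` V = W" and contp: "continuous_on V p"
    using cov by (auto simp: covering_space_def)
  obtain s where s: "continuous_on W s" "s \<in> W \<rightarrow> V" "s (p a) = a" "\<And>y. y \<in> W \<Longrightarrow> p (s y) = id y"
    by (rule covering_space_lift_strong[OF cov a _ assms(3,4) continuous_on_id, of "p a"]) (use a pV in auto)
  have contsp: "continuous_on V (s \<circ> p)"
    using continuous_on_compose[OF contp] continuous_on_subset[OF s(1)] pV by blast
  have sp: "s (p v) = v" if "v \<in> V" for v
  \<comment> \<open>s \<circ> p and id are lifts of p through p that agree at a\<close>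
  proof -
    have "(s \<circ> p) v = id v"
    proof (rule covering_space_lift_unique[OF cov, of "s \<circ> p" a id V p v])
      show "p \<in> V \<rightarrow> W" "s \<circ> p \<in> V \<rightarrow> V"
        using s(2) pV by auto
      show "\<And>x. x \<in> V \<Longrightarrow> p x = p ((s \<circ> p) x)"
        using s(4) pV by auto
    qed (use s(3) contp contsp a that \<open>connected V\<close> in \<open>auto simp: continuous_on_id\<close>)
    then show ?thesis by simp
  qed
  have "s ` W = V"
    using s(2) sp pV by force
  then have "homeomorphism V W p s"
    using s sp pV contp by (simp add: homeomorphism_def)
  then show ?thesis
    by (rule that)
qed

lemma connected_closed_complement_components:
  assumes X: "connected X" and Y: "closed Y" and XYO: "X = Y \<union> Z" "Y \<inter> Z = {}"
    and fin: "finite (components Z)"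
    and bd: "\<And>V. V \<in> components Z \<Longrightarrow> closure V - V \<subseteq> Y \<and> connected (closure V - V)"
  shows "connected Y"
proof (rule ccontr)
  \<comment> \<open>each component of Z joins the side of a separation of Y containing its connected frontier;
    this would separate X\<close>
  assume "\<not> connected Y"
  then obtain A0 B0 where "closed A0" "closed B0" "Y \<subseteq> A0 \<union> B0" "A0 \<inter> B0 \<inter> Y = {}"
    "A0 \<inter> Y \<noteq> {}" "B0 \<inter> Y \<noteq> {}"
    unfolding connected_closed by blast
  then obtain A B where AB: "closed A" "closed B" "Y = A \<union> B" "A \<inter> B = {}" "A \<noteq> {}" "B \<noteq> {}"
    using Y by (intro that[of "A0 \<inter> Y" "B0 \<inter> Y"]) auto
  define VA where "VA = {V \<in> components Z. closure V - V \<subseteq> A}"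
  define VB where "VB = {V \<in> components Z. \<not> closure V - V \<subseteq> A}"
  have VB: "closure V - V \<subseteq> B" if "V \<in> VB" for V
  proof -
    have V: "V \<in> components Z"
      using that by (simp add: VB_def)
    have "closure V - V \<subseteq> A \<or> closure V - V \<subseteq> B"
      using bd[OF V] AB unfolding connected_closed by blast
    then show ?thesis
      using that by (simp add: VB_def)
  qed
  define SA where "SA = A \<union> \<Union>(closure ` VA)"
  define SB where "SB = B \<union> \<Union>(closure ` VB)"
  have "finite VA" "finite VB"
    using fin by (auto simp: VA_def VB_def)
  then have "closed SA" "closed SB"
    using AB by (auto simp: SA_def SB_def intro!: closed_Union)
  moreover have "X \<subseteq> SA \<union> SB"
  proof
    fix x assume "x \<in> X"
    show "x \<in> SA \<union> SB"
    proof (cases "x \<in> Z")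
      case True
      then have "connected_component_set Z x \<in> components Z" "x \<in> closure (connected_component_set Z x)"
        by (auto simp: components_def intro: closure_subset[THEN subsetD])
      then show ?thesis
        by (auto simp: SA_def SB_def VA_def VB_def)
    qed (use \<open>x \<in> X\<close> XYO AB in \<open>auto simp: SA_def SB_def\<close>)
  qed
  moreover have "SA \<inter> SB = {}"
  proof -
    have "SA \<subseteq> A \<union> \<Union>VA" "SB \<subseteq> B \<union> \<Union>VB"
      using VB by (auto simp: SA_def SB_def VA_def)
    moreover have "\<Union>VA \<inter> \<Union>VB = {}"
      using components_nonoverlap by (fastforce simp: VA_def VB_def)
    moreover have "\<Union>VA \<subseteq> Z" "\<Union>VB \<subseteq> Z"
      by (auto simp: VA_def VB_def dest: in_components_subset)
    ultimately show ?thesis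
      using XYO AB by blast
  qed
  moreover have "SA \<inter> X \<noteq> {}" "SB \<inter> X \<noteq> {}"
    using AB XYO by (auto simp: SA_def SB_def)
  ultimately show False
    using X unfolding connected_closed by blast
qed

lemma connected_frontier_simply_connected_S2:
  assumes V: "openin (top_of_set S2) V" "simply_connected V" and p: "p \<in> S2" "p \<notin> closure V"
  shows "connected (closure V - V)"
proof -
  \<comment> \<open>in the plane S2 - {p}, V becomes a bounded simply connected domain\<close>
  obtain h :: "real^3 \<Rightarrow> complex" and k where hk: "homeomorphism (S2 - {p}) UNIV h k"
    using homeomorphism_S2_minus_point[OF p(1)] by blast
  have clV: "closure V \<subseteq> S2 - {p}"
    using closure_subset_S2[OF openin_imp_subset[OF V(1)]] p(2) by blast
  then have Vp: "V \<subseteq> S2 - {p}"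
    using closure_subset by blast
  have "openin (top_of_set (S2 - {p})) V"
    using V(1) Vp by (rule openin_subset_trans) blast
  then have oV: "open (h ` V)"
    using homeomorphism_imp_open_map[OF hk] by (simp add: openin_open_trans)
  have "V homeomorphic h ` V"
    using homeomorphism_of_subsets[OF hk Vp, where T''="{}"] unfolding homeomorphic_def by auto
  then have sc: "simply_connected (h ` V)"
    using V(2) homeomorphic_simply_connected by blast
  have cpt: "compact (h ` closure V)"
    using compact_closure_subset_S2[OF openin_imp_subset[OF V(1)]]
      continuous_on_subset[OF homeomorphism_cont1[OF hk] clV] by (rule compact_continuous_image[rotated])
  have hcl: "closure (h ` V) = h ` closure V"
  proof
    show "closure (h ` V) \<subseteq> h ` closure V"
      using cpt
      by (intro closure_minimal compact_imp_closed image_mono closure_subset)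
    show "h ` closure V \<subseteq> closure (h ` V)"
      using continuous_on_subset[OF homeomorphism_cont1[OF hk] clV]
      by (rule image_closure_subset[OF _ closed_closure closure_subset])
  qed
  have "bounded (h ` V)"
    using bounded_subset[OF compact_imp_bounded[OF cpt] image_mono[OF closure_subset]] .
  then have "connected (frontier (h ` V))"
    using simply_connected_eq_frontier_properties[OF oV] sc by metis
  moreover have "frontier (h ` V) = h ` (closure V - V)"
  proof -
    have "inj_on h (S2 - {p})"
      using homeomorphism_apply1[OF hk] by (metis inj_onI)
    then have "h ` (closure V - V) = h ` closure V - h ` V"
      using clV Vp by (intro inj_on_image_set_diff) auto
    then show ?thesis
      using interior_open[OF oV] hcl by (simp add: frontier_def)
  qed
  moreover have "k ` h ` (closure V - V) = closure V - V"
    using homeomorphism_apply1[OF hk] clV by (force simp: image_image)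
  ultimately show ?thesis
    using connected_continuous_image[OF continuous_on_subset[OF homeomorphism_cont2[OF hk]]] by fastforce
qed

section \<open>Jordan curves on the sphere\<close>

lemma jordan_curve_compact: "jordan_curve C \<Longrightarrow> compact C \<and> C \<subseteq> S2"
  unfolding jordan_curve_def using compact_simple_path_image by blast

lemma jordan_curve_closedin: "jordan_curve C \<Longrightarrow> closedin (top_of_set S2) C"
  using jordan_curve_compact by (simp add: closed_subset compact_imp_closed)

lemma openin_components_S2_diff:
  assumes "closedin (top_of_set S2) C" "U \<in> components (S2 - C)"
  shows "openin (top_of_set S2) U"
  using openin_components_openin[OF locally_connected_S2 openin_diff[OF openin_subtopology_self assms(1)]
      assms(2)] .

text \<open>Puncturing the sphere at a point p of U turns C into a Jordan curve in the plane whose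
  outside is mapped into U.\<close>

locale punctured_Jordan_curve =
  fixes C U :: "(real^3) set" and p and h :: "real^3 \<Rightarrow> complex" and k
  assumes jordan: "jordan_curve C" and component: "U \<in> components (S2 - C)" and p: "p \<in> U"
    and homeo: "homeomorphism (S2 - {p}) UNIV h k"
begin

lemma U_subset: "U \<subseteq> S2 - C"
  using in_components_subset[OF component] .

lemma C_subset: "C \<subseteq> S2 - {p}"
  using jordan_curve_compact[OF jordan] U_subset p by auto

lemma h_k: "h (k w) = w"
  using homeo by (simp add: homeomorphism_def)

lemma k_h: "x \<in> S2 - {p} \<Longrightarrow> k (h x) = x"
  using homeo by (simp add: homeomorphism_def)

lemma continuous_on_k: "continuous_on A k"
  using continuous_on_subset[OF homeomorphism_cont2[OF homeo]] by blast

lemma k_image_complement: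
  assumes "w \<notin> h ` C"
  shows "k w \<in> S2 - C - {p}"
proof -
  have "k w \<in> S2 - {p}"
    using homeo unfolding homeomorphism_def by blast
  moreover have "k w \<notin> C"
    using assms h_k by (metis image_eqI)
  ultimately show ?thesis
    by blast
qed

lemma h_image_C_iff:
  assumes "x \<in> S2 - {p}"
  shows "h x \<in> h ` C \<longleftrightarrow> x \<in> C"
proof
  assume "h x \<in> h ` C"
  then obtain y where "y \<in> C" "h x = h y"
    by blast
  moreover have "y \<in> S2 - {p}"
    using \<open>y \<in> C\<close> C_subset by blast
  ultimately have "x = y"
    using k_h[OF assms] k_h by metis
  then show "x \<in> C"
    using \<open>y \<in> C\<close> by simp
qed blast

lemma openin_component: "openin (top_of_set S2) U"
  using openin_components_S2_diff[OF jordan_curve_closedin[OF jordan] component] .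

lemma openin_k_image:
  assumes "open I"
  shows "openin (top_of_set S2) (k ` I)"
proof -
  have "openin (top_of_set UNIV) I"
    using assms by simp
  then have "openin (top_of_set (S2 - {p})) (k ` I)"
    by (rule homeomorphism_imp_open_map[OF homeomorphism_symD[OF homeo]])
  moreover have "openin (top_of_set S2) (S2 - {p})"
    using p U_subset by (intro openin_diff[OF openin_subtopology_self]) auto
  ultimately show ?thesis
    using openin_trans by blast
qed

lemma simple_closed_curve_image:
  obtains c where "simple_path c" "pathfinish c = pathstart c" "path_image c = h ` C"
proof -
  obtain \<gamma> where \<gamma>: "simple_path \<gamma>" "pathfinish \<gamma> = pathstart \<gamma>" "C = path_image \<gamma>"
    using jordan unfolding jordan_curve_def by blast
  have "inj_on h C"
    by (rule inj_on_inverseI[where g=k]) (use C_subset k_h in auto)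
  then have "simple_path (h \<circ> \<gamma>)"
    using \<gamma> C_subset continuous_on_subset[OF homeomorphism_cont1[OF homeo]]
    by (intro simple_path_continuous_image) auto
  then show ?thesis
    using \<gamma> that by (simp add: pathfinish_compose pathstart_compose path_image_compose)
qed

lemma
  shows inside_nonempty: "inside (h ` C) \<noteq> {}"
    and open_inside: "open (inside (h ` C))"
    and connected_inside: "connected (inside (h ` C))"
    and bounded_inside: "bounded (inside (h ` C))"
    and connected_outside: "connected (outside (h ` C))"
    and unbounded_outside: "\<not> bounded (outside (h ` C))"
    and inside_Un_outside: "inside (h ` C) \<union> outside (h ` C) = - h ` C"
    and frontier_inside: "frontier (inside (h ` C)) = h ` C"
    and frontier_outside: "frontier (outside (h ` C)) = h ` C"
proof -
  obtain c where c: "simple_path c" "pathfinish c = pathstart c" "path_image c = h ` C"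
    by (rule simple_closed_curve_image)
  note Jordan = Jordan_inside_outside[OF c(1,2), unfolded c(3)]
  show "inside (h ` C) \<noteq> {}" "open (inside (h ` C))" "connected (inside (h ` C))"
    "bounded (inside (h ` C))" "connected (outside (h ` C))" "\<not> bounded (outside (h ` C))"
    "inside (h ` C) \<union> outside (h ` C) = - h ` C"
    "frontier (inside (h ` C)) = h ` C" "frontier (outside (h ` C)) = h ` C"
    using Jordan by auto
qed

lemma k_image_inside: "k ` inside (h ` C) \<subseteq> S2 - C - {p}"
  and k_image_outside: "k ` outside (h ` C) \<subseteq> S2 - C - {p}"
  using inside_Un_outside k_image_complement by blast+

lemma k_image_outside_subset: "k ` outside (h ` C) \<subseteq> U"
proof (rule components_maximal[OF component])
  show "connected (k ` outside (h ` C))"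
    using connected_continuous_image[OF continuous_on_k connected_outside] .
  show "k ` outside (h ` C) \<subseteq> S2 - C"
    using k_image_outside by blast
  \<comment> \<open>the outside is unbounded, so k maps part of it into a neighbourhood of p inside U\<close>
  obtain e where e: "e > 0" "\<And>x. x \<in> S2 \<Longrightarrow> dist x p < e \<Longrightarrow> x \<in> U"
    using openin_component p unfolding openin_euclidean_subtopology_iff by (metis dist_commute)
  define K where "K = S2 - ball p e"
  have "compact K"
    unfolding K_def Diff_eq by (rule compact_Int_closed[OF compact_S2 closed_Compl[OF open_ball]])
  moreover have "K \<subseteq> S2 - {p}"
    using e(1) by (auto simp: K_def)
  ultimately have "bounded (h ` K)"
    using continuous_on_subset[OF homeomorphism_cont1[OF homeo]]
    by (metis compact_continuous_image compact_imp_bounded)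
  then have "\<not> outside (h ` C) \<subseteq> h ` K"
    using unbounded_outside bounded_subset by metis
  then obtain w where w: "w \<in> outside (h ` C)" "w \<notin> h ` K"
    by blast
  then have "k w \<notin> K"
    using h_k by (metis image_eqI)
  moreover have "k w \<in> S2"
    using k_image_outside w(1) by blast
  ultimately have "k w \<in> U"
    using e by (auto simp: K_def dist_commute)
  then show "U \<inter> k ` outside (h ` C) \<noteq> {}"
    using w by blast
qed

lemma k_image_inside_Int_component: "k ` inside (h ` C) \<inter> U = {}"
proof (rule ccontr)
  \<comment> \<open>otherwise the image of the inside would be clopen in U, and it misses p\<close>
  assume meet: "k ` inside (h ` C) \<inter> U \<noteq> {}"
  have kI: "k ` inside (h ` C) \<subseteq> U"
  proof (rule components_maximal[OF component])
    show "U \<inter> k ` inside (h ` C) \<noteq> {}"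
      using meet by blast
    show "connected (k ` inside (h ` C))"
      using connected_continuous_image[OF continuous_on_k connected_inside] .
    show "k ` inside (h ` C) \<subseteq> S2 - C"
      using k_image_inside by blast
  qed
  have US2: "U \<subseteq> S2"
    using U_subset by blast
  have "openin (top_of_set U) (k ` inside (h ` C))"
    by (rule openin_subset_trans[OF openin_k_image[OF open_inside] kI US2])
  moreover have "closedin (top_of_set U) (k ` inside (h ` C))"
  proof -
    have "compact (k ` closure (inside (h ` C)))"
      by (rule compact_continuous_image[OF continuous_on_k]) (simp add: bounded_inside)
    moreover have "closure (inside (h ` C)) = inside (h ` C) \<union> h ` C"
      using frontier_inside closure_Un_frontier[of "inside (h ` C)"] by simp
    moreover have "k ` h ` C = C"
    proof -
      have "k ` h ` C = (\<lambda>x. x) ` C"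
        unfolding image_image by (rule image_cong[OF refl k_h]) (use C_subset in blast)
      then show ?thesis
        by simp
    qed
    ultimately have "U \<inter> k ` closure (inside (h ` C)) = k ` inside (h ` C)"
      using kI U_subset by (simp add: image_Un Int_Un_distrib) blast
    then show ?thesis
      using closedin_closed_Int[OF compact_imp_closed[OF \<open>compact (k ` closure (inside (h ` C)))\<close>], of U]
      by simp
  qed
  ultimately have "k ` inside (h ` C) = {} \<or> k ` inside (h ` C) = U"
    using in_components_connected[OF component] unfolding connected_clopen by blast
  moreover have "k ` inside (h ` C) \<noteq> {}" "p \<notin> k ` inside (h ` C)"
    using inside_nonempty k_image_inside by auto
  ultimately show False
    using p by blast
qed

lemma complement_eq_k_image_inside: "S2 - C - U = k ` inside (h ` C)"
proof -
  have "x \<in> k ` inside (h ` C)" if x: "x \<in> S2 - C - U" for x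
  proof -
    have xp: "x \<in> S2 - {p}"
      using x p by auto
    then have "h x \<notin> h ` C"
      using x h_image_C_iff by blast
    moreover have "h x \<notin> outside (h ` C)"
    proof
      assume "h x \<in> outside (h ` C)"
      then have "k (h x) \<in> U"
        using k_image_outside_subset by blast
      then show False
        using k_h[OF xp] x by simp
    qed
    ultimately have "h x \<in> inside (h ` C)"
      using inside_Un_outside by (metis ComplI UnE)
    then show ?thesis
      by (rule image_eqI[where f=k, OF k_h[OF xp, symmetric]])
  qed
  then show ?thesis
    using k_image_inside k_image_inside_Int_component by blast
qed

lemma C_subset_closure: "C \<subseteq> closure U"
proof
  fix x assume x: "x \<in> C"
  have "h x \<in> closure (outside (h ` C))"
    using frontier_outside x unfolding frontier_def by blast
  then have "k (h x) \<in> closure (k ` outside (h ` C))"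
    using image_closure_subset[OF continuous_on_k closed_closure closure_subset] by blast
  moreover have "k (h x) = x"
    using k_h x C_subset by blast
  ultimately show "x \<in> closure U"
    using closure_mono[OF k_image_outside_subset] by auto
qed

lemma simply_connected_complement: "simply_connected (S2 - C - U)"
proof -
  obtain c where c: "simple_path c" "pathfinish c = pathstart c" "path_image c = h ` C"
    by (rule simple_closed_curve_image)
  have "homeomorphism (inside (h ` C)) (k ` inside (h ` C)) k h"
    by (rule homeomorphism_of_subsets[OF homeomorphism_symD[OF homeo] subset_UNIV empty_subsetI refl])
  then have "inside (h ` C) homeomorphic S2 - C - U"
    unfolding complement_eq_k_image_inside homeomorphic_def by blast
  moreover have "simply_connected (inside (h ` C))"
    using simply_connected_inside_simple_path[OF c(1)] c(3) by simp
  ultimately show ?thesis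
    using homeomorphic_simply_connected by blast
qed

end

lemma Jordan_curve_complement_component:
  assumes "jordan_curve C" "U \<in> components (S2 - C)"
  shows "C \<subseteq> closure U" "openin (top_of_set S2) (S2 - C - U)"
    "connected (S2 - C - U)" "simply_connected (S2 - C - U)"
proof -
  obtain p where p: "p \<in> U"
    using in_components_nonempty[OF assms(2)] by blast
  then obtain h :: "real^3 \<Rightarrow> complex" and k where "homeomorphism (S2 - {p}) UNIV h k"
    using homeomorphism_S2_minus_point in_components_subset[OF assms(2)] by blast
  then interpret punctured_Jordan_curve C U p h k
    using assms p by unfold_locales
  show "C \<subseteq> closure U" "simply_connected (S2 - C - U)"
    using C_subset_closure simply_connected_complement by auto
  show "openin (top_of_set S2) (S2 - C - U)" "connected (S2 - C - U)"
    unfolding complement_eq_k_image_inside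
    using openin_k_image[OF open_inside] connected_continuous_image[OF continuous_on_k connected_inside]
    by auto
qed

section \<open>Branched covers and their iterates\<close>

lemma local_form_chartE:
  assumes "local_form f x d"
  obtains Ux V and \<phi> :: "real^3 \<Rightarrow> complex" and \<phi>' \<psi> and \<psi>' :: "complex \<Rightarrow> real^3"
  where "1 \<le> d" "openin (top_of_set S2) Ux" "openin (top_of_set S2) V" "x \<in> Ux"
    "homeomorphism Ux (ball 0 1) \<phi> \<phi>'" "homeomorphism V (ball 0 1) \<psi> \<psi>'"
    "\<And>m. m \<in> Ux \<Longrightarrow> f m = \<psi>' (\<phi> m ^ d)"
proof -
  obtain Ux V and \<phi> :: "real^3 \<Rightarrow> complex" and \<phi>' \<psi> and \<psi>' :: "complex \<Rightarrow> real^3"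
    where d: "1 \<le> d" and Ux: "openin (top_of_set S2) Ux" "x \<in> Ux"
    and V: "openin (top_of_set S2) V" "f ` Ux \<subseteq> V"
    and hU: "homeomorphism Ux (ball 0 1) \<phi> \<phi>'" and hV: "homeomorphism V (ball 0 1) \<psi> \<psi>'"
    and eq: "\<forall>z\<in>ball 0 1. \<psi> (f (\<phi>' z)) = z ^ d"
    using assms unfolding local_form_def by blast
  have feq: "f m = \<psi>' (\<phi> m ^ d)" if "m \<in> Ux" for m
  proof -
    have "\<phi> m \<in> ball 0 1" "\<phi>' (\<phi> m) = m"
      using hU that by (auto simp: homeomorphism_def)
    then have "\<psi> (f m) = \<phi> m ^ d"
      using eq by metis
    moreover have "f m \<in> V"
      using V(2) that by blast
    ultimately show ?thesis
      using hV by (metis homeomorphism_def)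
  qed
  show ?thesis
    by (rule that[OF d Ux(1) V(1) Ux(2) hU hV feq])
qed

lemma open_power_image: "open U \<Longrightarrow> 1 \<le> d \<Longrightarrow> open ((\<lambda>z::complex. z ^ d) ` U)"
proof (rule open_mapping_thm[of _ UNIV])
  assume d: "1 \<le> d"
  show "\<not> (\<lambda>z::complex. z ^ d) constant_on UNIV"
  proof
    assume "(\<lambda>z::complex. z ^ d) constant_on UNIV"
    then have "(0::complex) ^ d = 1 ^ d"
      unfolding constant_on_def by (metis UNIV_I)
    then show False
      using d by (cases d) auto
  qed
qed (auto intro!: holomorphic_intros)

lemma branched_cover_openin_image:
  assumes f: "branched_cover f" and N: "openin (top_of_set S2) N"
  shows "openin (top_of_set S2) (f ` N)"
proof (subst openin_subopen, intro ballI)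
  fix y assume "y \<in> f ` N"
  then obtain x where x: "x \<in> N" "y = f x" by auto
  have "x \<in> S2"
    using x N openin_imp_subset by blast
  then obtain d where "local_form f x d"
    using f by (auto simp: branched_cover_def)
  then obtain Ux V and \<phi> :: "real^3 \<Rightarrow> complex" and \<phi>' \<psi> and \<psi>' :: "complex \<Rightarrow> real^3"
    where d: "1 \<le> d" and Ux: "openin (top_of_set S2) Ux" and V: "openin (top_of_set S2) V"
      and xU: "x \<in> Ux" and hU: "homeomorphism Ux (ball 0 1) \<phi> \<phi>'" and hV: "homeomorphism V (ball 0 1) \<psi> \<psi>'"
      and eq: "\<And>m. m \<in> Ux \<Longrightarrow> f m = \<psi>' (\<phi> m ^ d)"
    by (rule local_form_chartE) iprover
  define M where "M = N \<inter> Ux"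
  have "openin (top_of_set Ux) M"
    using N Ux(1) openin_imp_subset[OF Ux(1)] unfolding M_def
    by (metis inf_le2 openin_Int openin_subset_trans)
  then have "open (\<phi> ` M)"
    using homeomorphism_imp_open_map[OF hU] openin_open_trans by blast
  then have "open ((\<lambda>z. z ^ d) ` \<phi> ` M)"
    using open_power_image d by blast
  moreover have "(\<lambda>z. z ^ d) ` \<phi> ` M \<subseteq> ball 0 1"
  proof -
    have "\<phi> ` M \<subseteq> ball 0 1"
      using hU by (auto simp: M_def homeomorphism_def)
    then show ?thesis
      using d by (auto simp: norm_power power_less_one_iff)
  qed
  ultimately have "openin (top_of_set V) (\<psi>' ` (\<lambda>z. z ^ d) ` \<phi> ` M)"
    using homeomorphism_imp_open_map[OF homeomorphism_symD[OF hV]] by (simp add: openin_open_eq)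
  moreover have "\<psi>' ` (\<lambda>z. z ^ d) ` \<phi> ` M = f ` M"
    unfolding image_image by (intro image_cong) (auto simp: M_def eq)
  ultimately have "openin (top_of_set S2) (f ` M)"
    using V openin_trans by metis
  then show "\<exists>T. openin (top_of_set S2) T \<and> y \<in> T \<and> T \<subseteq> f ` N"
    using x xU by (auto simp: M_def)
qed

lemma branched_cover_locally_injective:
  assumes f: "branched_cover f" and x: "x \<in> S2" "\<not> critical f x"
  obtains N where "x \<in> N" "openin (top_of_set S2) N" "inj_on f N"
proof -
  obtain d where lf: "local_form f x d"
    using f x by (auto simp: branched_cover_def)
  have "1 \<le> d" "\<not> 2 \<le> d"
    using lf x unfolding critical_def local_form_def by blast+
  then have d: "d = 1"
    by linarith
  obtain Ux V and \<phi> :: "real^3 \<Rightarrow> complex" and \<phi>' \<psi> and \<psi>' :: "complex \<Rightarrow> real^3"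
    where "1 \<le> d" and Ux: "openin (top_of_set S2) Ux" and "openin (top_of_set S2) V" and xU: "x \<in> Ux"
      and hU: "homeomorphism Ux (ball 0 1) \<phi> \<phi>'" and hV: "homeomorphism V (ball 0 1) \<psi> \<psi>'"
      and eq: "\<And>m. m \<in> Ux \<Longrightarrow> f m = \<psi>' (\<phi> m ^ d)"
    using lf by (rule local_form_chartE) iprover
  have "inj_on \<phi> Ux" "inj_on \<psi>' (ball 0 1)"
    using homeomorphism_apply1[OF hU] homeomorphism_apply1[OF homeomorphism_symD[OF hV]]
    by (metis inj_onI)+
  then have "inj_on f Ux"
    using hU eq d by (auto simp: inj_on_def homeomorphism_def)
  then show ?thesis
    using that Ux xU by blast
qed

lemma post_closed_under_map: "y \<in> post f \<Longrightarrow> f y \<in> post f"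
  unfolding post_def by clarsimp (metis funpow.simps(2) o_apply le_SucI)

lemma critical_value_in_post: "critical f c \<Longrightarrow> f c \<in> post f"
  unfolding post_def by (rule CollectI, rule exI[of _ c], rule exI[of _ 1]) simp

lemma branched_cover_funpow:
  assumes "branched_cover f"
  shows "continuous_on S2 (f ^^ n)" "(f ^^ n) ` S2 \<subseteq> S2"
proof -
  have "continuous_on S2 (f ^^ n) \<and> (f ^^ n) ` S2 \<subseteq> S2"
  proof (induction n)
    case (Suc n)
    then show ?case
      using assms by (auto simp: branched_cover_def intro!: continuous_on_compose2[of S2 f])
  qed (simp add: continuous_on_id)
  then show "continuous_on S2 (f ^^ n)" "(f ^^ n) ` S2 \<subseteq> S2"
    by auto
qed

lemma branched_cover_openin_image_funpow:
  assumes "branched_cover f" "openin (top_of_set S2) N"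
  shows "openin (top_of_set S2) ((f ^^ n) ` N)"
proof (induction n)
  case (Suc n)
  then show ?case
    using branched_cover_openin_image[OF assms(1) Suc] by (simp add: image_image)
qed (use assms in simp)

lemma branched_cover_funpow_locally_injective:
  assumes f: "branched_cover f" and "x \<in> S2" "(f ^^ n) x \<notin> post f"
  shows "\<exists>N. x \<in> N \<and> openin (top_of_set S2) N \<and> inj_on (f ^^ n) N"
  using assms(3)
proof (induction n)
  case 0
  then show ?case
    using assms(2) by auto
next
  case (Suc n)
  then obtain N1 where N1: "x \<in> N1" "openin (top_of_set S2) N1" "inj_on (f ^^ n) N1"
    using post_closed_under_map[of "(f ^^ n) x" f] by auto
  have "\<not> critical f ((f ^^ n) x)"
    using Suc.prems critical_value_in_post by fastforce
  moreover have "(f ^^ n) x \<in> S2"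
    using branched_cover_funpow(2)[OF f] assms(2) by blast
  ultimately obtain N2 where N2: "(f ^^ n) x \<in> N2" "openin (top_of_set S2) N2" "inj_on f N2"
    using branched_cover_locally_injective[OF f] by metis
  define N where "N = N1 \<inter> (S2 \<inter> (f ^^ n) -` N2)"
  have "openin (top_of_set S2) N"
    unfolding N_def using branched_cover_funpow[OF f] N1(2) N2(2)
    by (intro openin_Int continuous_openin_preimage) auto
  moreover have "inj_on (f ^^ Suc n) N"
    using N1(3) N2(3) by (auto simp: N_def inj_on_def)
  moreover have "x \<in> N"
    using N1 N2 assms(2) by (simp add: N_def)
  ultimately show ?case
    by blast
qed

section \<open>Preimages of Jordan domains\<close>

locale S2_branched_self_map =
  fixes g :: "real^3 \<Rightarrow> real^3" and C :: "(real^3) set"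
  assumes continuous: "continuous_on S2 g" and maps_S2: "g ` S2 \<subseteq> S2"
    and openin_image: "\<And>N. openin (top_of_set S2) N \<Longrightarrow> openin (top_of_set S2) (g ` N)"
    and locally_injective:
      "\<And>x. x \<in> S2 \<Longrightarrow> g x \<notin> C \<Longrightarrow> \<exists>N. x \<in> N \<and> openin (top_of_set S2) N \<and> inj_on g N"
begin

lemma openin_preimage: "openin (top_of_set S2) W \<Longrightarrow> openin (top_of_set S2) (S2 \<inter> g -` W)"
  by (rule continuous_openin_preimage[OF continuous]) (use maps_S2 in auto)

lemma component_preimage:
  assumes W: "openin (top_of_set S2) W" and V: "V \<in> components (S2 \<inter> g -` W)"
  shows "openin (top_of_set S2) V" "closure V \<inter> (S2 \<inter> g -` W) = V" "V \<subseteq> S2" "closure V \<subseteq> S2"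
proof -
  show "openin (top_of_set S2) V"
    using openin_components_openin[OF locally_connected_S2 openin_preimage[OF W] V] .
  show "closure V \<inter> (S2 \<inter> g -` W) = V"
    using closure_Int_component_eq[OF locally_connected_S2 openin_preimage[OF W] V] .
  show "V \<subseteq> S2"
    using in_components_subset[OF V] by blast
  then show "closure V \<subseteq> S2"
    by (rule closure_subset_S2)
qed

lemma image_component_preimage:
  assumes W: "openin (top_of_set S2) W" "connected W" and V: "V \<in> components (S2 \<inter> g -` W)"
  shows "g ` V = W"
proof -
  have VW: "g ` V \<subseteq> W"
    using in_components_subset[OF V] by blast
  have "openin (top_of_set W) (g ` V)"
    using openin_image[OF component_preimage(1)[OF W(1) V]] VW openin_imp_subset[OF W(1)]
    by (rule openin_subset_trans)
  moreover have "closedin (top_of_set W) (g ` V)"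
  proof -
    have "compact (g ` closure V)"
      using compact_closure_subset_S2[OF component_preimage(3)[OF W(1) V]]
        continuous_on_subset[OF continuous component_preimage(4)[OF W(1) V]]
      by (rule compact_continuous_image[rotated])
    moreover have "W \<inter> g ` closure V = g ` V"
      using component_preimage(2,4)[OF W(1) V] VW closure_subset by blast
    ultimately show ?thesis
      using closedin_closed_Int[OF compact_imp_closed, of "g ` closure V" W] by simp
  qed
  ultimately have "g ` V = {} \<or> g ` V = W"
    using W(2) unfolding connected_clopen by blast
  then show ?thesis
    using in_components_nonempty[OF V] by blast
qed

lemma finite_fibre:
  assumes "q \<notin> C"
  shows "finite (S2 \<inter> g -` {q})"
proof (rule ccontr)
  let ?F = "S2 \<inter> g -` {q}"
  assume "infinite ?F"
  moreover have "closed ?F"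
    using continuous_closed_preimage_constant[OF continuous closed_S2, of q] by (simp add: Int_def)
  then have "compact (S2 \<inter> ?F)"
    by (rule compact_Int_closed[OF compact_S2])
  then have "compact ?F"
    by (simp add: Int_absorb1)
  ultimately obtain x where x: "x \<in> ?F" "x islimpt ?F"
    unfolding compact_eq_Bolzano_Weierstrass by blast
  then obtain N where N: "x \<in> N" "openin (top_of_set S2) N" "inj_on g N"
    using locally_injective assms by auto
  then obtain G where "open G" "N = S2 \<inter> G"
    by (auto simp: openin_open)
  then obtain y where y: "y \<in> ?F" "y \<in> N" "y \<noteq> x"
    using x(2) N(1) unfolding islimpt_def by blast
  have "g y = g x"
    using x(1) y(1) by simp
  then show False
    using inj_onD[OF N(3) _ y(2) N(1)] y(3) by blast
qed

lemma finite_components_preimage: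
  assumes W: "openin (top_of_set S2) W" "connected W" "W \<inter> C = {}"
  shows "finite (components (S2 \<inter> g -` W))"
proof (cases "W = {}")
  case False
  then obtain q where q: "q \<in> W" by blast
  \<comment> \<open>every component meets the finite fibre over q\<close>
  have "components (S2 \<inter> g -` W) \<subseteq> connected_component_set (S2 \<inter> g -` W) ` (S2 \<inter> g -` {q})"
  proof
    fix V assume V: "V \<in> components (S2 \<inter> g -` W)"
    obtain x where x: "x \<in> V" "g x = q"
      using image_component_preimage[OF W(1,2) V] q by (metis imageE)
    obtain z where "V = connected_component_set (S2 \<inter> g -` W) z"
      using V by (auto simp: components_iff)
    then have "V = connected_component_set (S2 \<inter> g -` W) x"
      using x(1) connected_component_eq by blast
    then show "V \<in> connected_component_set (S2 \<inter> g -` W) ` (S2 \<inter> g -` {q})"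
      using x in_components_subset[OF V] by blast
  qed
  moreover have "finite (S2 \<inter> g -` {q})"
    using finite_fibre W(3) q by blast
  ultimately show ?thesis
    by (rule finite_surj[rotated])
qed simp

lemma homeomorphism_injective:
  assumes N: "openin (top_of_set S2) N" and inj: "inj_on g N"
  obtains k where "homeomorphism N (g ` N) g k"
proof (rule homeomorphism_injective_open_map[OF continuous_on_subset[OF continuous] refl inj])
  show "N \<subseteq> S2"
    using openin_imp_subset[OF N] .
  fix U assume U: "openin (top_of_set N) U"
  show "openin (top_of_set (g ` N)) (g ` U)"
  proof (rule openin_subset_trans)
    show "openin (top_of_set S2) (g ` U)"
      using openin_image openin_trans[OF U N] .
    show "g ` U \<subseteq> g ` N"
      using openin_imp_subset[OF U] by blast
    show "g ` N \<subseteq> S2"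
      using maps_S2 openin_imp_subset[OF N] by blast
  qed
qed (rule that)

lemma disjoint_injective_neighbourhoods:
  assumes F: "finite F" "F \<subseteq> V" "g ` F \<inter> C = {}" and V: "openin (top_of_set S2) V"
  obtains M where "\<And>x. x \<in> F \<Longrightarrow> x \<in> M x \<and> openin (top_of_set S2) (M x) \<and> M x \<subseteq> V \<and> inj_on g (M x)"
    "\<And>x y. x \<in> F \<Longrightarrow> y \<in> F \<Longrightarrow> x \<noteq> y \<Longrightarrow> M x \<inter> M y = {}"
proof -
  have "\<forall>x\<in>F. \<exists>N. x \<in> N \<and> openin (top_of_set S2) N \<and> inj_on g N"
  proof
    fix x assume "x \<in> F"
    then have "x \<in> S2" "g x \<notin> C"
      using F(2,3) openin_imp_subset[OF V] by auto
    then show "\<exists>N. x \<in> N \<and> openin (top_of_set S2) N \<and> inj_on g N"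
      by (rule locally_injective)
  qed
  then obtain N where N: "\<And>x. x \<in> F \<Longrightarrow> x \<in> N x \<and> openin (top_of_set S2) (N x) \<and> inj_on g (N x)"
    by (metis bchoice)
  obtain r where r: "r > 0" "\<And>a b. a \<in> F \<Longrightarrow> b \<in> F \<Longrightarrow> a \<noteq> b \<Longrightarrow> ball a r \<inter> ball b r = {}"
    using finite_separated_by_balls[OF F(1)] by blast
  show ?thesis
  proof (rule that[of "\<lambda>x. N x \<inter> V \<inter> ball x r"])
    fix x assume x: "x \<in> F"
    have "openin (top_of_set S2) (N x \<inter> V \<inter> ball x r)"
      using N[OF x] V by (simp add: openin_Int_open openin_Int)
    moreover have "inj_on g (N x \<inter> V \<inter> ball x r)"
      by (rule inj_on_subset[of g "N x"]) (use N[OF x] in auto)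
    moreover have "x \<in> N x \<inter> V \<inter> ball x r"
      using N[OF x] x F(2) r(1) by auto
    ultimately show "x \<in> N x \<inter> V \<inter> ball x r \<and> openin (top_of_set S2) (N x \<inter> V \<inter> ball x r) \<and>
        N x \<inter> V \<inter> ball x r \<subseteq> V \<and> inj_on g (N x \<inter> V \<inter> ball x r)"
      by blast
  next
    fix x y assume "x \<in> F" "y \<in> F" "x \<noteq> y"
    then show "(N x \<inter> V \<inter> ball x r) \<inter> (N y \<inter> V \<inter> ball y r) = {}"
      using r(2) by blast
  qed
qed

lemma covering_space_component_preimage:
  assumes W: "openin (top_of_set S2) W" "connected W" "W \<inter> C = {}"
    and V: "V \<in> components (S2 \<inter> g -` W)"
  shows "covering_space V g W"
proof (rule covering_spaceI)
  have VS2: "V \<subseteq> S2" and clV: "closure V \<inter> (S2 \<inter> g -` W) = V"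
    and oV: "openin (top_of_set S2) V" and clVS2: "closure V \<subseteq> S2"
    using component_preimage[OF W(1) V] by auto
  show "continuous_on V g"
    using continuous_on_subset[OF continuous VS2] .
  show "g ` V = W"
    using image_component_preimage[OF W(1,2) V] .
  fix q assume q: "q \<in> W"
  define F where "F = V \<inter> g -` {q}"
  have FV: "F \<subseteq> V"
    by (simp add: F_def)
  have "F \<subseteq> S2 \<inter> g -` {q}"
    using VS2 by (auto simp: F_def)
  moreover have "q \<notin> C"
    using q W(3) by blast
  ultimately have finF: "finite F"
    using finite_fibre finite_subset by blast
  have "g ` F \<inter> C = {}"
    using \<open>q \<notin> C\<close> by (auto simp: F_def)
  then obtain M where M: "\<And>x. x \<in> F \<Longrightarrow> x \<in> M x \<and> openin (top_of_set S2) (M x) \<and> M x \<subseteq> V \<and> inj_on g (M x)"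
    and disj: "\<And>x y. x \<in> F \<Longrightarrow> y \<in> F \<Longrightarrow> x \<noteq> y \<Longrightarrow> M x \<inter> M y = {}"
    by (rule disjoint_injective_neighbourhoods[OF finF FV _ oV]) iprover
  have "\<forall>x\<in>F. \<exists>k. homeomorphism (M x) (g ` M x) g k"
  proof
    fix x assume "x \<in> F"
    then obtain k where "homeomorphism (M x) (g ` M x) g k"
      using M by (meson homeomorphism_injective)
    then show "\<exists>k. homeomorphism (M x) (g ` M x) g k"
      by blast
  qed
  then obtain k where k: "\<And>x. x \<in> F \<Longrightarrow> homeomorphism (M x) (g ` M x) g (k x)"
    by (metis bchoice)
  \<comment> \<open>the part of the closure of V outside the sheets is compact and its image misses q\<close>
  define K where "K = closure V \<inter> (S2 - \<Union>(M ` F))"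
  have "closedin (top_of_set S2) (S2 - \<Union>(M ` F))"
    using M by (intro closedin_diff closedin_topspace[of "top_of_set S2", simplified] openin_Union) auto
  then have "closed (S2 - \<Union>(M ` F))"
    using closedin_closed_trans[OF _ closed_S2] by blast
  then have "compact K"
    unfolding K_def by (rule compact_Int_closed[OF compact_closure_subset_S2[OF VS2]])
  moreover have "continuous_on K g"
    by (rule continuous_on_subset[OF continuous]) (auto simp: K_def)
  ultimately have "compact (g ` K)"
    by (rule compact_continuous_image[rotated])
  moreover have "g ` K \<subseteq> S2"
    using maps_S2 clVS2 by (auto simp: K_def)
  ultimately have clgK: "closedin (top_of_set S2) (g ` K)"
    using closed_subset compact_imp_closed by blast
  have qK: "q \<notin> g ` K"
  proof
    assume "q \<in> g ` K"
    then obtain z where z: "z \<in> K" "g z = q"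
      by blast
    then have "z \<in> V"
      using clV q by (auto simp: K_def)
    then show False
      using z M by (auto simp: K_def F_def)
  qed
  define T where "T = (W \<inter> (\<Inter>x\<in>F. g ` M x)) - g ` K"
  have TW: "T \<subseteq> W"
    by (auto simp: T_def)
  have "openin (top_of_set S2) ((\<Inter>x\<in>F. g ` M x) \<inter> S2)"
    using finF M openin_image by (intro openin_INT[of F "top_of_set S2", simplified]) auto
  then have "openin (top_of_set S2) (W \<inter> ((\<Inter>x\<in>F. g ` M x) \<inter> S2) - g ` K)"
    using openin_diff[OF openin_Int[OF W(1)] clgK] by blast
  moreover have "W \<inter> ((\<Inter>x\<in>F. g ` M x) \<inter> S2) - g ` K = T"
    using openin_imp_subset[OF W(1)] by (auto simp: T_def)
  ultimately have oT: "openin (top_of_set S2) T"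
    by simp
  define sheet where "sheet x = M x \<inter> g -` T" for x
  show "\<exists>T. q \<in> T \<and> openin (top_of_set W) T \<and>
        (\<exists>v. \<Union>v = V \<inter> g -` T \<and> (\<forall>u\<in>v. openin (top_of_set V) u) \<and>
             pairwise disjnt v \<and> (\<forall>u\<in>v. \<exists>k. homeomorphism u T g k))"
  proof (intro exI conjI)
    show "q \<in> T"
      using q qK M by (auto simp: T_def F_def)
    show "openin (top_of_set W) T"
      using oT TW openin_imp_subset[OF W(1)] by (rule openin_subset_trans)
    show "\<Union>(sheet ` F) = V \<inter> g -` T"
    proof
      show "\<Union>(sheet ` F) \<subseteq> V \<inter> g -` T"
        using M by (auto simp: sheet_def)
      show "V \<inter> g -` T \<subseteq> \<Union>(sheet ` F)"
      proof
        fix y assume y: "y \<in> V \<inter> g -` T"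
        then have "y \<notin> K"
          by (auto simp: T_def)
        then have "y \<in> \<Union>(M ` F)"
          using y VS2 closure_subset by (auto simp: K_def)
        then show "y \<in> \<Union>(sheet ` F)"
          using y by (auto simp: sheet_def)
      qed
    qed
    show "\<forall>u\<in>sheet ` F. openin (top_of_set V) u"
    proof
      fix u assume "u \<in> sheet ` F"
      then obtain x where x: "x \<in> F" "u = M x \<inter> (S2 \<inter> g -` T)"
        using M VS2 by (auto simp: sheet_def)
      then have "openin (top_of_set S2) u"
        using M openin_preimage[OF oT] by blast
      then show "openin (top_of_set V) u"
        by (rule openin_subset_trans) (use x M VS2 in auto)
    qed
    show "pairwise disjnt (sheet ` F)"
    proof (rule pairwiseI)
      fix u u' assume "u \<in> sheet ` F" "u' \<in> sheet ` F" "u \<noteq> u'"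
      then obtain x y where "x \<in> F" "y \<in> F" "x \<noteq> y" "u = sheet x" "u' = sheet y"
        by blast
      then show "disjnt u u'"
        using disj by (auto simp: sheet_def disjnt_def)
    qed
    show "\<forall>u\<in>sheet ` F. \<exists>k. homeomorphism u T g k"
    proof
      fix u assume "u \<in> sheet ` F"
      then obtain x where x: "x \<in> F" "u = sheet x"
        by blast
      have "T \<subseteq> g ` M x"
        using x(1) by (auto simp: T_def)
      then have "g ` u = T"
        using x(2) unfolding sheet_def by blast
      then have "homeomorphism u T g (k x)"
        by (rule homeomorphism_of_subsets[OF k[OF x(1)], where T''="{}", rotated 2])
          (use x in \<open>auto simp: sheet_def\<close>)
      then show "\<exists>k. homeomorphism u T g k"
        by blast
    qed
  qed
qed

lemma homeomorphism_component_preimage: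
  assumes W: "openin (top_of_set S2) W" "connected W" "W \<inter> C = {}" "simply_connected W"
    and V: "V \<in> components (S2 \<inter> g -` W)"
  obtains s where "homeomorphism V W g s"
  using covering_space_simply_connected_homeomorphism[OF covering_space_component_preimage[OF W(1-3) V]
      in_components_connected[OF V] W(4) locally_open_subset[OF locally_path_connected_S2 W(1)]] .

lemma connected_frontier_component_preimage:
  assumes W: "openin (top_of_set S2) W" "connected W" "W \<inter> C = {}" "simply_connected W"
    and V: "V \<in> components (S2 \<inter> g -` W)" and p: "p \<in> S2" "p \<notin> closure V"
  shows "connected (closure V - V)"
proof (rule connected_frontier_simply_connected_S2[OF component_preimage(1)[OF W(1) V] _ p])
  obtain s where "homeomorphism V W g s"
    by (rule homeomorphism_component_preimage[OF W V])
  then have "V homeomorphic W"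
    unfolding homeomorphic_def by blast
  then show "simply_connected V"
    using W(4) homeomorphic_simply_connected_eq by blast
qed

lemma preimage_closure_subset:
  assumes "A \<subseteq> S2"
  shows "S2 \<inter> g -` closure A \<subseteq> closure (S2 \<inter> g -` A)"
proof
  fix x assume x: "x \<in> S2 \<inter> g -` closure A"
  show "x \<in> closure (S2 \<inter> g -` A)"
  proof (subst closure_approachable, intro allI impI)
    fix e :: real assume "e > 0"
    have "openin (top_of_set S2) (g ` (S2 \<inter> ball x e))"
      by (rule openin_image) (simp add: openin_open_Int)
    moreover have "g x \<in> g ` (S2 \<inter> ball x e) \<inter> closure A"
      using x \<open>e > 0\<close> by auto
    ultimately have "g ` (S2 \<inter> ball x e) \<inter> A \<noteq> {}"
      using openin_Int_closure_eq_empty assms by blast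
    then show "\<exists>y\<in>S2 \<inter> g -` A. dist y x < e"
      by (auto simp: dist_commute)
  qed
qed

lemma connected_Union_closure_components_preimage:
  assumes J: "jordan_curve C" and U: "U \<in> components (S2 - C)"
  shows "connected (\<Union> (closure ` components (S2 \<inter> g -` U)))"
proof -
  define W where "W = S2 - C - U"
  define Y where "Y = \<Union> (closure ` components (S2 \<inter> g -` U))"
  have oU: "openin (top_of_set S2) U"
    using openin_components_S2_diff[OF jordan_curve_closedin[OF J] U] .
  have UC: "U \<inter> C = {}" and US2: "U \<subseteq> S2"
    using in_components_subset[OF U] by auto
  have oW: "openin (top_of_set S2) W" and cW: "connected W" and scW: "simply_connected W"
    and WC: "W \<inter> C = {}"
    using Jordan_curve_complement_component[OF J U] by (auto simp: W_def)
  have fin: "finite (components (S2 \<inter> g -` U))"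
    using finite_components_preimage[OF oU in_components_connected[OF U] UC] .
  have YS2: "Y \<subseteq> S2"
    unfolding Y_def by (intro UN_least) (rule component_preimage(4)[OF oU])
  have preY: "S2 \<inter> g -` U \<subseteq> Y"
  proof
    fix x assume x: "x \<in> S2 \<inter> g -` U"
    then have "connected_component_set (S2 \<inter> g -` U) x \<in> components (S2 \<inter> g -` U)"
      unfolding components_iff by blast
    moreover have "x \<in> closure (connected_component_set (S2 \<inter> g -` U) x)"
      using x closure_subset by fastforce
    ultimately show "x \<in> Y"
      unfolding Y_def by blast
  qed
  have "closed Y"
    using fin by (auto simp: Y_def)
  moreover have "Y \<inter> (S2 \<inter> g -` W) = {}"
  proof -
    have "closure V \<inter> (S2 \<inter> g -` W) = {}" if "V \<in> components (S2 \<inter> g -` U)" for V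
      using openin_Int_closure_eq_empty[OF openin_preimage[OF oW]] in_components_subset[OF that]
      by (auto simp: W_def)
    then show ?thesis
      by (auto simp: Y_def)
  qed
  moreover have "S2 = Y \<union> (S2 \<inter> g -` W)"
  proof -
    \<comment> \<open>points over C are limits of points over U, because g is open and C lies in the closure of U\<close>
    have "S2 \<inter> g -` C \<subseteq> closure (S2 \<inter> g -` U)"
      using preimage_closure_subset[OF US2] Jordan_curve_complement_component(1)[OF J U] by blast
    also have "\<dots> \<subseteq> Y"
      using closure_minimal[OF preY \<open>closed Y\<close>] .
    finally show ?thesis
      using preY YS2 maps_S2 unfolding W_def by blast
  qed
  moreover have "closure V - V \<subseteq> Y \<and> connected (closure V - V)"
    if V: "V \<in> components (S2 \<inter> g -` W)" for V
  proof
    show bdY: "closure V - V \<subseteq> Y"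
      using component_preimage(2,4)[OF oW V] \<open>S2 = Y \<union> (S2 \<inter> g -` W)\<close> by blast
    show "connected (closure V - V)"
    proof (cases "S2 \<inter> g -` U = {}")
      case True
      then have "closure V - V = {}"
        using bdY by (simp add: Y_def)
      then show ?thesis
        by (simp only: connected_empty)
    next
      case False
      then obtain q where q: "q \<in> S2 \<inter> g -` U"
        by blast
      moreover have "closure V \<inter> (S2 \<inter> g -` U) = {}"
        using openin_Int_closure_eq_empty[OF openin_preimage[OF oU]] in_components_subset[OF V]
        by (auto simp: W_def)
      ultimately have "q \<notin> closure V"
        by blast
      then show ?thesis
        using connected_frontier_component_preimage[OF oW cW WC scW V] q by blast
    qed
  qed
  ultimately show ?thesis
    unfolding Y_def[symmetric]
    by (intro connected_closed_complement_components[OF connected_S2 _ _ _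
          finite_components_preimage[OF oW cW WC]])
qed

end

lemma thurston_map_funpow_branched_self_map:
  assumes "thurston_map f" "post f \<subseteq> C"
  shows "S2_branched_self_map (f ^^ n) C"
proof
  have f: "branched_cover f"
    using assms(1) by (simp add: thurston_map_def)
  show "continuous_on S2 (f ^^ n)" "(f ^^ n) ` S2 \<subseteq> S2"
    using branched_cover_funpow[OF f] by auto
  show "openin (top_of_set S2) ((f ^^ n) ` N)" if "openin (top_of_set S2) N" for N
    using branched_cover_openin_image_funpow[OF f that] .
  show "\<exists>N. x \<in> N \<and> openin (top_of_set S2) N \<and> inj_on (f ^^ n) N"
    if "x \<in> S2" "(f ^^ n) x \<notin> C" for x
    using branched_cover_funpow_locally_injective[OF f that(1)] that(2) assms(2) by blast
qed

theorem lemma2p1: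
  fixes f :: "real^3 \<Rightarrow> real^3" and C :: "(real^3) set" and n :: nat
  assumes "thurston_map f"
    and "jordan_curve C"
    and "post f \<subseteq> C"
    and "U \<in> components (S2 - C)"
  shows "connected (\<Union> (tiles f n U))"
  unfolding tiles_def
  using S2_branched_self_map.connected_Union_closure_components_preimage[OF
      thurston_map_funpow_branched_self_map[OF assms(1,3)] assms(2,4)] .

end
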